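(* Let $k\ge1$, and let $a,b$ be integers with $b\ge1$, $0\le a\le b$ and $k\equiv a\pmod b$. Then $N\big((k+1+a-b)(k-a)/b,\;k\big)=(k-a)/b$.
   Context: For $n>k\ge1$, $N(n,k)$ is the nullity of the $n\times n$ skew-symmetric Toeplitz matrix $A(n,k)$ whose first $k$ superdiagonals have all entries $1$ and whose remaining superdiagonals have all entries $0$. This nullity depends only on $n\bmod (k^2+k)$, and $N(n,k)$ is defined for every integer $n$ as $N(n',k)$ for any $n'>k$ with $n'\equiv n\pmod{k^2+k}$. *)

theory Defs
  imports "Jordan_Normal_Form.Matrix_Kernel"
begin

definition A_mat :: "nat \<Rightarrow> nat \<Rightarrow> real mat" where
  "A_mat n k = mat n n (\<lambda>(i, j).
      if i < j \<and> j - i \<le> k then 1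
      else if j < i \<and> i - j \<le> k then -1
      else 0)"

definition N_nat :: "nat \<Rightarrow> nat \<Rightarrow> nat" where
  "N_nat n k = kernel_dim (A_mat n k)"

text \<open>N(n,k) for an arbitrary integer n: N(n',k) for the representative n' > k with
  n' congruent to n modulo k^2+k (the paper shows the choice of n' does not matter);
  we take n' = k + 1 + ((n - k - 1) mod (k^2+k)).\<close>
definition N :: "int \<Rightarrow> nat \<Rightarrow> nat" where
  "N n k = N_nat (k + 1 + nat ((n - int k - 1) mod (int k ^ 2 + int k))) k"

end

theory Submission
  imports Defs
begin

text \<open>Extend \<open>x \<in> \<real>\<^sup>n\<close> by zeros and let \<open>W j = x (j - k) + \<dots> + x j\<close>. Row \<open>i\<close> of
  \<open>A(n,k) x\<close> is \<open>W (i + k) - W i\<close>, so \<open>x\<close> lies in the kernel iff \<open>W j = p (j mod k)\<close> on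
  \<open>[0, n + k)\<close> for some \<open>p\<close>. Conversely every \<open>p\<close> determines a sequence \<open>x\<close> through its
  prefix sums \<open>F j = p (j mod k) + F (j - k - 1)\<close>, and \<open>x\<close> vanishes on \<open>[n, n + k)\<close> iff \<open>F\<close> is
  constant on \<open>[n - 1, n + k)\<close>. Writing \<open>n + k = M (k + 1) + e\<close> with \<open>e \<le> k\<close>, this says that \<open>k + 1\<close> block
  sums of \<open>p\<close> agree: \<open>k\<close> linear relations, each identifying two values of \<open>p\<close> or killing one.

  For \<open>k = a + m b\<close>, \<open>e = a (m + 1)\<close> and \<open>M \<equiv> m (mod k)\<close> these relations identify \<open>p\<close> along
  the orbits of two shifts modulo \<open>k\<close>: one orbit runs into the killed value, each other one
  meets \<open>[0, m)\<close> exactly once. So the admissible \<open>p\<close>, and with them the kernel, form an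
  \<open>m\<close>-dimensional space on which the first \<open>m\<close> prefix sums are coordinates. In the theorem
  \<open>n + k = m (k + 1) + a (m + 1)\<close>, and the representative of \<open>n\<close> chosen by \<open>N\<close> differs
  from \<open>n\<close> by a multiple of \<open>k\<^sup>2 + k\<close>, which changes \<open>M\<close> by a multiple of \<open>k\<close>.\<close>

section \<open>Dimension of a kernel from a biorthogonal family\<close>

context kernel
begin

lemma functional_lincomb:
  assumes "B \<subseteq> mat_kernel A"
  shows "(\<Sum>l<nc. c l * lincomb x B $ l) = (\<Sum>u\<in>B. x u * (\<Sum>l<nc. c l * u $ l))"
proof -
  have "(\<Sum>l<nc. c l * lincomb x B $ l) = (\<Sum>l<nc. \<Sum>u\<in>B. c l * (x u * u $ l))"
    using assms by (intro sum.cong) (simp_all add: lincomb_index sum_distrib_left)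
  also have "\<dots> = (\<Sum>u\<in>B. x u * (\<Sum>l<nc. c l * u $ l))"
    by (subst sum.swap) (simp add: sum_distrib_left mult_ac)
  finally show ?thesis .
qed

lemma lincomb_biorthogonal:
  fixes d :: nat
  assumes inj: "inj_on g {..<d}" and g: "g ` {..<d} \<subseteq> mat_kernel A"
    and biorth: "\<And>i j. i < d \<Longrightarrow> j < d \<Longrightarrow>
      (\<Sum>l<nc. c i l * g j $ l) = (if i = j then 1 else 0)"
    and i: "i < d"
  shows "(\<Sum>l<nc. c i l * lincomb x (g ` {..<d}) $ l) = x (g i)"
proof -
  have "(\<Sum>l<nc. c i l * lincomb x (g ` {..<d}) $ l) = (\<Sum>j<d. x (g j) * (\<Sum>l<nc. c i l * g j $ l))"
    unfolding functional_lincomb[OF g] by (simp add: sum.reindex[OF inj])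
  also have "\<dots> = (\<Sum>j<d. if j = i then x (g j) else 0)"
    using i by (intro sum.cong) (auto simp: biorth)
  also have "\<dots> = x (g i)"
    using i by simp
  finally show ?thesis .
qed

lemma mat_kernel_subset_span_biorthogonal:
  fixes d :: nat
  assumes inj: "inj_on g {..<d}" and g: "g ` {..<d} \<subseteq> mat_kernel A"
    and biorth: "\<And>i j. i < d \<Longrightarrow> j < d \<Longrightarrow>
      (\<Sum>l<nc. c i l * g j $ l) = (if i = j then 1 else 0)"
    and separating: "\<And>v. v \<in> mat_kernel A \<Longrightarrow>
      (\<And>i. i < d \<Longrightarrow> (\<Sum>l<nc. c i l * v $ l) = 0) \<Longrightarrow> v = 0\<^sub>v nc"
  shows "mat_kernel A \<subseteq> span (g ` {..<d})"
proof
  fix v assume v: "v \<in> mat_kernel A"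
  define x where "x u = (\<Sum>l<nc. c (the_inv_into {..<d} g u) l * v $ l)" for u
  define w where "w = lincomb x (g ` {..<d})"
  have w: "w \<in> mat_kernel A"
    unfolding w_def by (rule Ker.lincomb_closed[OF g]) auto
  have carrier: "v \<in> carrier_vec nc" "w \<in> carrier_vec nc"
    using v w mat_kernel[OF A] by auto
  have "v - w \<in> mat_kernel A"
    using v w carrier mat_kernel[OF A]
    by (auto intro!: mat_kernelI[OF A] simp: mult_minus_distrib_mat_vec[OF A])
  then have vw: "v - w = 0\<^sub>v nc"
  proof (rule separating)
    fix i assume i: "i < d"
    have "(\<Sum>l<nc. c i l * (v - w) $ l) = (\<Sum>l<nc. c i l * v $ l) - (\<Sum>l<nc. c i l * w $ l)"
      using carrier by (auto simp: sum_subtractf[symmetric] algebra_simps intro!: sum.cong)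
    also have "(\<Sum>l<nc. c i l * w $ l) = (\<Sum>l<nc. c i l * v $ l)"
      using i inj by (simp add: w_def lincomb_biorthogonal[OF inj g biorth] x_def the_inv_into_f_f)
    finally show "(\<Sum>l<nc. c i l * (v - w) $ l) = 0"
      by simp
  qed
  have "v = w"
  proof (rule eq_vecI)
    fix i assume "i < dim_vec w"
    then show "v $ i = w $ i"
      using arg_cong[OF vw, of "\<lambda>u. u $ i"] carrier by simp
  qed (use carrier in simp)
  then show "v \<in> span (g ` {..<d})"
    using Ker.finite_span[OF _ g] by (auto simp: w_def)
qed

lemma dim_eq_if_biorthogonal:
  assumes g: "\<And>i. i < d \<Longrightarrow> g i \<in> mat_kernel A"
    and biorth: "\<And>i j. i < d \<Longrightarrow> j < d \<Longrightarrow>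
      (\<Sum>l<nc. c i l * g j $ l) = (if i = j then 1 else 0)"
    and separating: "\<And>v. v \<in> mat_kernel A \<Longrightarrow>
      (\<And>i. i < d \<Longrightarrow> (\<Sum>l<nc. c i l * v $ l) = 0) \<Longrightarrow> v = 0\<^sub>v nc"
  shows "dim = d"
proof -
  have inj: "inj_on g {..<d}"
    by (rule inj_onI) (metis biorth lessThan_iff one_neq_zero)
  have B: "g ` {..<d} \<subseteq> mat_kernel A"
    using g by auto
  have "lin_indpt (g ` {..<d})"
  proof (rule Ker.finite_lin_indpt2[OF finite_imageI[OF finite_lessThan] B])
    fix x assume "lincomb x (g ` {..<d}) = 0\<^sub>v nc"
    then show "\<forall>u\<in>g ` {..<d}. x u = 0"
      using lincomb_biorthogonal[OF inj B biorth, of _ x] by auto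
  qed
  moreover have "span (g ` {..<d}) = mat_kernel A"
    using B mat_kernel_subset_span_biorthogonal[OF inj B biorth separating] Ker.span_is_subset2
    by blast
  ultimately have "basis (g ` {..<d})"
    using B by (simp add: Ker.basis_def)
  then show ?thesis
    using Ker.dim_basis[of "g ` {..<d}"] card_image[OF inj] by simp
qed

end

section \<open>Window sums\<close>

definition zext :: "nat \<Rightarrow> 'a::zero vec \<Rightarrow> nat \<Rightarrow> 'a" where
  "zext n v j = (if j < n then v $ j else 0)"

text \<open>For \<open>j < k\<close> the window \<open>{j - k..j}\<close> is truncated at 0, which is harmless because the
  entries at negative indices are zero.\<close>
definition window_sum :: "nat \<Rightarrow> nat \<Rightarrow> 'a::comm_monoid_add vec \<Rightarrow> nat \<Rightarrow> 'a" where
  "window_sum n k v j = (\<Sum>i\<in>{j - k..j}. zext n v i)"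

lemma sum_zext_lessThan:
  assumes "n \<le> l"
  shows "(\<Sum>i<l. zext n v i) = (\<Sum>i<n. zext n v i)"
  using assms by (intro sum.mono_neutral_right) (auto simp: zext_def)

lemma A_mat_mult_vec_index:
  assumes v: "v \<in> carrier_vec n" and i: "i < n"
  shows "(A_mat n k *\<^sub>v v) $ i = window_sum n k v (i + k) - window_sum n k v i"
proof -
  have "(A_mat n k *\<^sub>v v) $ i
      = (\<Sum>j<n + k. (if i < j \<and> j - i \<le> k then 1 else if j < i \<and> i - j \<le> k then -1 else 0) * zext n v j)"
    using v i by (auto simp: A_mat_def mult_mat_vec_def scalar_prod_def atLeast0LessThan zext_def
        split: if_split_asm intro!: sum.mono_neutral_cong_left)
  also have "\<dots> = (\<Sum>j<n + k. (if j \<in> {i..i + k} then zext n v j else 0)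
      - (if j \<in> {i - k..i} then zext n v j else 0))"
    by (intro sum.cong) auto
  also have "\<dots> = (\<Sum>j\<in>{i..i + k}. zext n v j) - (\<Sum>j\<in>{i - k..i}. zext n v j)"
    unfolding sum_subtractf sum.inter_restrict[OF finite_lessThan, symmetric]
    using i by (simp add: Int_absorb1 subset_eq)
  finally show ?thesis
    by (simp add: window_sum_def)
qed

lemma A_mat_carrier: "A_mat n k \<in> carrier_mat n n"
  by (simp add: A_mat_def)

lemma mat_kernel_A_mat_iff:
  assumes v: "v \<in> carrier_vec n"
  shows "v \<in> mat_kernel (A_mat n k) \<longleftrightarrow> (\<forall>i<n. window_sum n k v (i + k) = window_sum n k v i)"
proof -
  have "v \<in> mat_kernel (A_mat n k) \<longleftrightarrow> (\<forall>i<n. (A_mat n k *\<^sub>v v) $ i = 0)"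
    using v carrier_matD[OF A_mat_carrier]
    by (simp add: mat_kernel[OF A_mat_carrier] vec_eq_iff[of _ "0\<^sub>v n"] del: index_mult_mat_vec)
  then show ?thesis
    using v by (simp add: A_mat_mult_vec_index)
qed

lemma window_sum_mod:
  assumes k: "k \<ge> 1" and periodic: "\<forall>i<n. window_sum n k v (i + k) = window_sum n k v i"
    and j: "j < n + k"
  shows "window_sum n k v j = window_sum n k v (j mod k)"
  using j
proof (induction j rule: less_induct)
  case (less j)
  show ?case
  proof (cases "j < k")
    case False
    then have "window_sum n k v j = window_sum n k v (j - k)"
      using periodic less.prems by (metis add.commute le_add_diff_inverse not_less less_diff_conv2)
    also have "\<dots> = window_sum n k v ((j - k) mod k)"
      using less k False by simp
    finally show ?thesis
      using False by (simp add: le_mod_geq)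
  qed simp
qed

lemma window_sum_blocks:
  assumes "r \<le> k"
  shows "(\<Sum>t\<le>T. window_sum n k v (r + t * (k + 1))) = (\<Sum>i<r + 1 + T * (k + 1). zext n v i)"
proof (induction T)
  case 0
  have "{r - k..r} = {..<r + 1}"
    using assms by auto
  then show ?case
    by (simp add: window_sum_def)
next
  case (Suc T)
  have "{r + Suc T * (k + 1) - k..r + Suc T * (k + 1)} = {r + 1 + T * (k + 1)..<r + 1 + Suc T * (k + 1)}"
    by auto
  then have "(\<Sum>t\<le>Suc T. window_sum n k v (r + t * (k + 1)))
      = (\<Sum>i\<in>{0..<r + 1 + T * (k + 1)}. zext n v i)
        + (\<Sum>i\<in>{r + 1 + T * (k + 1)..<r + 1 + Suc T * (k + 1)}. zext n v i)"
    using Suc by (simp add: window_sum_def lessThan_atLeast0)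
  also have "\<dots> = (\<Sum>i<r + 1 + Suc T * (k + 1). zext n v i)"
    unfolding lessThan_atLeast0 by (rule sum.atLeastLessThan_concat) auto
  finally show ?case .
qed

lemma prefix_sum_eq_window_sum:
  fixes v :: "'a::comm_semiring_1 vec"
  assumes "i \<le> k"
  shows "(\<Sum>l<n. (if l \<le> i then 1 else 0) * v $ l) = window_sum n k v i"
proof -
  have "(\<Sum>l<n. (if l \<le> i then 1 else 0) * v $ l) = (\<Sum>l<n + i + 1. if l \<in> {..i} then zext n v l else 0)"
    by (intro sum.mono_neutral_cong_left) (auto simp: zext_def)
  also have "\<dots> = (\<Sum>l\<le>i. zext n v l)"
  proof -
    have "{..<n + i + 1} \<inter> {..i} = {..i}"
      by auto
    then show ?thesis
      by (simp only: sum.inter_restrict[OF finite_lessThan, symmetric])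
  qed
  also have "\<dots> = window_sum n k v i"
    using assms by (simp add: window_sum_def atLeast0AtMost)
  finally show ?thesis .
qed

lemma zext_eq_0_if_window_sums_eq_0:
  assumes "\<And>j. j < n \<Longrightarrow> window_sum n k v j = 0" and "j < n"
  shows "zext n v j = 0"
  using assms(2)
proof (induction j rule: less_induct)
  case (less j)
  have "{j - k..j} = insert j {j - k..<j}"
    by auto
  then have "window_sum n k v j = zext n v j + (\<Sum>i\<in>{j - k..<j}. zext n v i)"
    by (simp add: window_sum_def)
  also have "(\<Sum>i\<in>{j - k..<j}. zext n v i) = 0"
    using less.prems by (intro sum.neutral ballI less.IH) auto
  finally show ?case
    using assms(1) less.prems by simp
qed

section \<open>Admissible sequences\<close>

lemma dvd_add_le_nat:
  fixes d x y :: nat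
  assumes "d dvd x" "d dvd y" "x < y"
  shows "x + d \<le> y"
proof -
  have "d \<le> y - x"
    using assms by (intro dvd_imp_le dvd_diff_nat) auto
  then show ?thesis
    using assms(3) by linarith
qed

lemma mod_add_div_mod_nat: "(j mod (k + 1) + j div (k + 1)) mod k = j mod (k::nat)"
proof -
  have "j = (j mod (k + 1) + j div (k + 1)) + k * (j div (k + 1))"
    using div_mult_mod_eq[of j "k + 1"] by (simp add: algebra_simps)
  then show ?thesis
    by (metis mod_mult_self2)
qed

text \<open>The theorem needs \<open>M = m\<close>; allowing any \<open>M \<equiv> m (mod k)\<close> also covers the representative
  of \<open>n\<close> modulo \<open>k\<^sup>2 + k\<close> used in the definition of \<open>N\<close>.\<close>
locale toeplitz_nullity =
  fixes k n a b m M :: nat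
  assumes k_pos: "1 \<le> k" and n_pos: "1 \<le> n" and a_le_b: "a \<le> b"
    and k_eq: "k = a + m * b"
    and n_add_k_eq: "n + k = M * (k + 1) + a * (m + 1)"
    and M_mod_k: "M mod k = m mod k"
begin

definition e :: nat where
  "e = a * (m + 1)"

lemma n_add_k_eq_e: "n + k = M * (k + 1) + e"
  by (simp add: n_add_k_eq e_def)

lemma k_eq_e: "k = e + m * (b - a)"
  using a_le_b by (simp add: k_eq e_def algebra_simps diff_mult_distrib2)

lemma e_le_k: "e \<le> k"
  using k_eq_e by simp

lemma m_le_k: "m \<le> k"
proof -
  have "b \<noteq> 0"
    using k_pos a_le_b unfolding k_eq by (cases b) auto
  then show ?thesis
    using k_eq by (simp add: trans_le_add2)
qed

lemma M_pos: "1 \<le> M"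
  using n_add_k_eq_e n_pos e_le_k by (cases M) auto

lemma m_less_e: "e \<noteq> 0 \<Longrightarrow> m < e"
  unfolding e_def by (cases a) auto

lemma e_add_m_le_k: "e < k \<Longrightarrow> e + m \<le> k"
  using k_eq_e by (cases "b - a") auto

lemma m_dvd_k_minus_e: "m dvd k - e"
  using k_eq_e by simp

lemma M_mod_k_add: "(x + M) mod k = (x + m) mod k"
  by (metis M_mod_k mod_add_right_eq)

definition admissible :: "(nat \<Rightarrow> real) \<Rightarrow> bool" where
  "admissible p \<longleftrightarrow> (\<forall>r.
     (r + 1 < e \<longrightarrow> p ((r + m + 1) mod k) = p r) \<and>
     (r + 1 = e \<longrightarrow> p r = 0) \<and>
     (e \<le> r \<and> r < k \<longrightarrow> p ((r + m) mod k) = p r))"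

lemma admissible_step_below: "admissible p \<Longrightarrow> r + 1 < e \<Longrightarrow> p ((r + m + 1) mod k) = p r"
  by (simp add: admissible_def)

lemma admissible_last: "admissible p \<Longrightarrow> r + 1 = e \<Longrightarrow> p r = 0"
  by (simp add: admissible_def)

lemma admissible_step_above: "admissible p \<Longrightarrow> e \<le> r \<Longrightarrow> r < k \<Longrightarrow> p ((r + m) mod k) = p r"
  by (simp add: admissible_def)

text \<open>The orbit of \<open>r\<close> under these
  steps is labelled by \<open>orbit r \<in> {0..m}\<close>; label \<open>m\<close> is the dead orbit, which ends at \<open>e - 1\<close>
  where \<open>p\<close> is forced to vanish.\<close>
definition orbit :: "nat \<Rightarrow> nat" where
  "orbit r = (if r < e then r mod (m + 1) else (r - e) mod m)"

lemma orbit_less_m: "i < m \<Longrightarrow> orbit i = i"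
  using m_less_e by (cases "e = 0") (auto simp: orbit_def)

lemma orbit_e_minus_1: "1 \<le> e \<Longrightarrow> orbit (e - 1) = m"
proof -
  assume "1 \<le> e"
  then obtain a' where a: "a = Suc a'"
    unfolding e_def by (cases a) auto
  have "e - 1 = m + a' * (m + 1)"
    unfolding e_def by (simp add: a)
  then show ?thesis
    using \<open>1 \<le> e\<close> mod_mult_self1[of m a' "m + 1"] by (simp add: orbit_def)
qed

lemma orbit_cases:
  assumes "r < k"
  shows "orbit r < m \<or> r < e \<and> orbit r = m"
proof (cases "r < e")
  case True
  then show ?thesis
    by (simp add: orbit_def) (metis less_Suc_eq mod_less_divisor zero_less_Suc)
next
  case False
  then have "m \<noteq> 0"
    using assms k_eq_e by (cases m) auto
  then show ?thesis
    using False by (simp add: orbit_def)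
qed

lemma orbit_step_below:
  assumes r: "r + 1 < e"
  shows "orbit ((r + m + 1) mod k) = orbit r"
proof (cases "r + m + 1 < e")
  case True
  then show ?thesis
    using e_le_k mod_add_self2[of r "m + 1"] by (simp add: orbit_def)
next
  case False
  define t where "t = r + m + 1 - e"
  have t: "t < m"
    unfolding t_def using r False by arith
  obtain a' where a: "a = Suc a'"
    using r unfolding e_def by (cases a) auto
  have "r = t + a' * (m + 1)"
    using False unfolding t_def e_def by (simp add: a)
  then have "orbit r = t"
    using r t mod_mult_self1[of t a' "m + 1"] by (simp add: orbit_def)
  moreover have "orbit ((r + m + 1) mod k) = t"
  proof (cases "r + m + 1 < k")
    case True
    then show ?thesis
      using False t by (simp add: orbit_def t_def)
  next
    case False
    then have "e = k"
      using r e_le_k e_add_m_le_k by fastforce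
    then have "(r + m + 1) mod k = t"
      using False r t m_le_k by (simp add: t_def le_mod_geq)
    then show ?thesis
      using orbit_less_m t by simp
  qed
  ultimately show ?thesis
    by simp
qed

lemma orbit_step_above:
  assumes r: "e \<le> r" "r < k"
  shows "orbit ((r + m) mod k) = orbit r"
proof (cases "r + m < k")
  case True
  then show ?thesis
    using r by (simp add: orbit_def mod_add_self2[of "r - e" m, symmetric])
next
  case False
  define t where "t = r + m - k"
  have t: "t < m" "(r + m) mod k = t"
    using r False m_le_k by (auto simp: t_def le_mod_geq)
  have "m dvd k - e - m"
    by (rule dvd_diff_nat[OF m_dvd_k_minus_e dvd_refl])
  moreover have "r - e = t + (k - e - m)"
    using r False e_add_m_le_k by (simp add: t_def)
  ultimately have "orbit r = t"
    using r t by (auto simp: orbit_def)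
  then show ?thesis
    using t orbit_less_m by simp
qed

definition orbit_indicator :: "nat \<Rightarrow> nat \<Rightarrow> real" where
  "orbit_indicator q r = (if r < k \<and> orbit r = q then 1 else 0)"

lemma orbit_indicator_less_m: "i < m \<Longrightarrow> orbit_indicator q i = (if i = q then 1 else 0)"
  using m_le_k by (simp add: orbit_indicator_def orbit_less_m)

lemma admissible_orbit_indicator:
  assumes "q < m"
  shows "admissible (orbit_indicator q)"
  unfolding admissible_def
proof (intro conjI allI impI)
  fix r assume "r + 1 < e"
  then show "orbit_indicator q ((r + m + 1) mod k) = orbit_indicator q r"
    using orbit_step_below[of r] e_le_k k_pos by (simp add: orbit_indicator_def)
next
  fix r assume "r + 1 = e"
  then have "r = e - 1" "1 \<le> e"
    by simp_all
  then show "orbit_indicator q r = 0"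
    using orbit_e_minus_1 assms by (simp add: orbit_indicator_def)
next
  fix r assume "e \<le> r \<and> r < k"
  then show "orbit_indicator q ((r + m) mod k) = orbit_indicator q r"
    using orbit_step_above[of r] k_pos by (simp add: orbit_indicator_def)
qed

lemma orbit_predecessor:
  assumes r: "r < k" "m \<le> r" "orbit r < m"
  obtains r' where "r' < r" "r' + 1 < e" "r = (r' + m + 1) mod k"
    | r' where "r' < r" "e \<le> r'" "r' < k" "r = (r' + m) mod k"
proof (cases "r < e + m")
  case True
  have "m + 1 \<le> r"
  proof (cases "r < e")
    case True
    then show ?thesis
      using r by (cases "r = m") (auto simp: orbit_def)
  next
    case False
    then show ?thesis
      using r True m_less_e by (cases "e = 0") auto
  qed
  then show ?thesis
    using that(1)[of "r - (m + 1)"] True r by auto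
next
  case False
  then show ?thesis
    using that(2)[of "r - m"] r by (cases "m = 0") auto
qed

lemma admissible_eq_0_off_dead_orbit:
  assumes p: "admissible p" "\<forall>q<m. p q = 0" and r: "r < k" "orbit r < m"
  shows "p r = 0"
  using r
proof (induction r rule: less_induct)
  case (less r)
  show ?case
  proof (cases "r < m")
    case False
    obtain r' where "r' < r" "orbit r' = orbit r" "p r' = p r"
    proof (rule orbit_predecessor[OF less.prems(1) _ less.prems(2)])
      show "m \<le> r"
        using False by simp
    next
      fix r' assume "r' < r" "r' + 1 < e" "r = (r' + m + 1) mod k"
      then show thesis
        using that[of r'] orbit_step_below[of r'] admissible_step_below[OF p(1), of r'] by simp
    next
      fix r' assume "r' < r" "e \<le> r'" "r' < k" "r = (r' + m) mod k"
      then show thesis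
        using that[of r'] orbit_step_above[of r'] admissible_step_above[OF p(1), of r'] by simp
    qed
    then show ?thesis
      using less by (metis order.strict_trans)
  qed (use p in simp)
qed

lemma admissible_eq_0_on_dead_orbit:
  assumes p: "admissible p" and r: "r < e" "orbit r = m"
  shows "p r = 0"
  using r
proof (induction "e - r" arbitrary: r rule: less_induct)
  case less
  show ?case
  proof (cases "r + 1 = e")
    case True
    then show ?thesis
      by (rule admissible_last[OF p])
  next
    case False
    have "m + 1 dvd r + 1"
      using less.prems by (simp add: orbit_def dvd_eq_mod_eq_0 mod_Suc)
    moreover have "m + 1 dvd e"
      unfolding e_def by (rule dvd_triv_right)
    ultimately have next_on_orbit: "r + m + 1 < e"
      using less.prems False dvd_add_le_nat[of "m + 1" "r + 1" e] by simp
    then have "orbit (r + m + 1) = m"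
      using orbit_step_below[of r] less.prems e_le_k by simp
    then have "p (r + m + 1) = 0"
      using less.hyps[of "r + m + 1"] next_on_orbit by simp
    moreover have "p (r + m + 1) = p r"
      using admissible_step_below[OF p, of r] next_on_orbit e_le_k by simp
    ultimately show ?thesis
      by simp
  qed
qed

lemma admissible_eq_0:
  assumes "admissible p" "\<forall>q<m. p q = 0" "r < k"
  shows "p r = 0"
  using orbit_cases[OF assms(3)] admissible_eq_0_off_dead_orbit[OF assms]
    admissible_eq_0_on_dead_orbit[OF assms(1)] by blast

section \<open>Kernel vectors of admissible sequences\<close>

text \<open>\<open>block_sum p r\<close> is the value of \<open>prefix p\<close> below at the \<open>j \<in> [n - 1, n + k)\<close> with
  \<open>j mod (k + 1) = r\<close>; the kernel vector built from \<open>p\<close> vanishes beyond \<open>n\<close> iff these agree.\<close>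
definition block_length :: "nat \<Rightarrow> nat" where
  "block_length r = M + (if r < e then 1 else 0)"

definition block_sum :: "(nat \<Rightarrow> real) \<Rightarrow> nat \<Rightarrow> real" where
  "block_sum p r = (\<Sum>t<block_length r. p ((r + t) mod k))"

lemma block_sum_Suc_minus:
  assumes "r < k"
  shows "block_sum p (Suc r) - block_sum p r =
    (if r + 1 < e then p ((r + m + 1) mod k) - p r
     else if r + 1 = e then - p r
     else p ((r + m) mod k) - p r)"
proof -
  define f where "f t = p ((r + t) mod k)" for t
  have telescope: "(\<Sum>t<T. f (Suc t)) - (\<Sum>t<T. f t) = f T - p r" for T
    using sum_lessThan_telescope[of f T] assms by (simp add: sum_subtractf f_def)
  have "block_sum p (Suc r) = (\<Sum>t<block_length (Suc r). f (Suc t))"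
    by (simp add: block_sum_def f_def)
  moreover have "block_sum p r = (\<Sum>t<block_length r. f t)"
    by (simp add: block_sum_def f_def)
  moreover have "f M = p ((r + m) mod k)" "f (M + 1) = p ((r + m + 1) mod k)"
    using M_mod_k_add[of r] M_mod_k_add[of "r + 1"] by (simp_all add: f_def add.commute add.left_commute)
  ultimately show ?thesis
    using telescope[of M] telescope[of "M + 1"] by (auto simp: block_length_def)
qed

lemma admissible_iff_block_sum: "admissible p \<longleftrightarrow> (\<forall>r<k. block_sum p (Suc r) = block_sum p r)"
proof
  assume p: "admissible p"
  show "\<forall>r<k. block_sum p (Suc r) = block_sum p r"
  proof (intro allI impI)
    fix r assume "r < k"
    then have "block_sum p (Suc r) - block_sum p r = 0"
      using admissible_step_below[OF p] admissible_last[OF p] admissible_step_above[OF p]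
      by (auto simp: block_sum_Suc_minus)
    then show "block_sum p (Suc r) = block_sum p r"
      by simp
  qed
next
  assume "\<forall>r<k. block_sum p (Suc r) = block_sum p r"
  then have diff: "r < k \<Longrightarrow> block_sum p (Suc r) - block_sum p r = 0" for r
    by simp
  show "admissible p"
    unfolding admissible_def
  proof (intro allI conjI impI)
    fix r assume "r + 1 < e"
    then show "p ((r + m + 1) mod k) = p r"
      using diff[of r] block_sum_Suc_minus[of r p] e_le_k by simp
  next
    fix r assume "r + 1 = e"
    then show "p r = 0"
      using diff[of r] block_sum_Suc_minus[of r p] e_le_k by simp
  next
    fix r assume "e \<le> r \<and> r < k"
    then show "p ((r + m) mod k) = p r"
      using diff[of r] block_sum_Suc_minus[of r p] by simp
  qed
qed

lemma block_sum_eq_block_sum_0: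
  assumes "admissible p" "r \<le> k"
  shows "block_sum p r = block_sum p 0"
  using assms(2) by (induction r) (use assms(1) admissible_iff_block_sum in auto)

text \<open>\<open>prefix p\<close> solves \<open>F j = p (j mod k) + F (j - k - 1)\<close>, with \<open>F\<close> zero at negative indices.\<close>
definition prefix :: "(nat \<Rightarrow> real) \<Rightarrow> nat \<Rightarrow> real" where
  "prefix p j = (\<Sum>t\<le>j div (k + 1). p ((j mod (k + 1) + t) mod k))"

definition lift :: "(nat \<Rightarrow> real) \<Rightarrow> nat \<Rightarrow> real" where
  "lift p j = prefix p j - (if j = 0 then 0 else prefix p (j - 1))"

definition kernel_vec :: "(nat \<Rightarrow> real) \<Rightarrow> real vec" where
  "kernel_vec p = vec n (lift p)"

lemma prefix_rec: "prefix p j = p (j mod k) + (if k + 1 \<le> j then prefix p (j - (k + 1)) else 0)"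
proof (cases "k + 1 \<le> j")
  case True
  define j' where "j' = j - (k + 1)"
  have j: "j div (k + 1) = Suc (j' div (k + 1))" "j mod (k + 1) = j' mod (k + 1)"
    using True by (simp_all add: j'_def le_div_geq le_mod_geq)
  have "prefix p j = prefix p j' + p ((j' mod (k + 1) + Suc (j' div (k + 1))) mod k)"
    unfolding prefix_def j by simp
  also have "(j' mod (k + 1) + Suc (j' div (k + 1))) mod k = j mod k"
    using mod_add_div_mod_nat[of j k] j by simp
  finally show ?thesis
    using True by (simp add: j'_def)
qed (simp add: prefix_def)

lemma window_sum_lift: "(\<Sum>i\<in>{j - k..j}. lift p i) = p (j mod k)"
proof -
  define P where "P i = (if i = 0 then 0 else prefix p (i - 1))" for i
  have "(\<Sum>i\<in>{j - k..j}. lift p i) = (\<Sum>i\<in>{j - k..j}. P (Suc i) - P i)"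
    by (simp add: lift_def P_def)
  also have "\<dots> = P (Suc j) - P (j - k)"
    by (rule sum_Suc_diff) simp
  also have "\<dots> = p (j mod k)"
    using prefix_rec[of p j] by (auto simp: P_def)
  finally show ?thesis .
qed

lemma div_eq_block_length:
  assumes "n - 1 \<le> j" "j < n + k"
  shows "j div (k + 1) + 1 = block_length (j mod (k + 1))"
proof (cases "M * (k + 1) \<le> j")
  case True
  have "j div (k + 1) = M"
    using True assms(2) n_add_k_eq_e e_le_k by (intro div_nat_eqI) (auto simp: algebra_simps)
  moreover from this have "j mod (k + 1) < e"
    using True assms(2) n_add_k_eq_e minus_div_mult_eq_mod[of j "k + 1"] by simp
  ultimately show ?thesis
    by (simp add: block_length_def)
next
  case False
  obtain M' where M: "M = Suc M'"
    using M_pos by (cases M) auto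
  have "j div (k + 1) = M'"
    using False assms(1) n_add_k_eq_e n_pos by (intro div_nat_eqI) (auto simp: M algebra_simps)
  moreover from this have "e \<le> j mod (k + 1)"
    using assms(1) n_add_k_eq_e n_pos minus_div_mult_eq_mod[of j "k + 1"] by (simp add: M)
  ultimately show ?thesis
    unfolding block_length_def by (simp add: M)
qed

lemma prefix_eq_block_sum:
  assumes "n - 1 \<le> j" "j < n + k"
  shows "prefix p j = block_sum p (j mod (k + 1))"
  using div_eq_block_length[OF assms]
  by (simp add: prefix_def block_sum_def lessThan_Suc_atMost[symmetric])

lemma lift_eq_0:
  assumes p: "admissible p" and j: "n \<le> j" "j < n + k"
  shows "lift p j = 0"
proof -
  have const: "prefix p i = block_sum p 0" if "n - 1 \<le> i" "i < n + k" for i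
  proof -
    have "i mod (k + 1) \<le> k"
      using mod_less_divisor[of "k + 1" i] by linarith
    with prefix_eq_block_sum[OF that] show ?thesis
      using block_sum_eq_block_sum_0[OF p \<open>i mod (k + 1) \<le> k\<close>] by simp
  qed
  have "prefix p j = block_sum p 0" "prefix p (j - 1) = block_sum p 0"
    using j by (auto intro!: const)
  then show ?thesis
    using j n_pos by (simp add: lift_def)
qed

lemma window_sum_kernel_vec:
  assumes p: "admissible p" and j: "j < n + k"
  shows "window_sum n k (kernel_vec p) j = p (j mod k)"
proof -
  have "zext n (kernel_vec p) i = lift p i" if "i \<in> {j - k..j}" for i
    using that j lift_eq_0[OF p, of i] by (simp add: zext_def kernel_vec_def)
  then show ?thesis
    by (simp add: window_sum_def window_sum_lift)
qed

lemma kernel_vec_mem_kernel: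
  assumes "admissible p"
  shows "kernel_vec p \<in> mat_kernel (A_mat n k)"
proof -
  have "kernel_vec p \<in> carrier_vec n"
    by (simp add: kernel_vec_def)
  then show ?thesis
    using window_sum_kernel_vec[OF assms] by (simp add: mat_kernel_A_mat_iff)
qed

lemma block_sum_window_sum:
  assumes v: "v \<in> mat_kernel (A_mat n k)" and r: "r \<le> k"
  shows "block_sum (window_sum n k v) r = (\<Sum>i<n. zext n v i)"
proof -
  have periodic: "\<forall>i<n. window_sum n k v (i + k) = window_sum n k v i"
    using v mat_kernel_A_mat_iff mat_kernel[OF A_mat_carrier] by blast
  define T where "T = block_length r - 1"
  have T: "block_length r = Suc T"
    using M_pos by (simp add: T_def block_length_def)
  have "r + t * (k + 1) < n + k" if "t \<le> T" for t
  proof -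
    have "t * (k + 1) \<le> T * (k + 1)"
      using that by (rule mult_le_mono1)
    moreover have "r + T * (k + 1) < n + k"
      using T r n_add_k_eq_e by (auto simp: block_length_def split: if_splits)
    ultimately show ?thesis
      by linarith
  qed
  then have "block_sum (window_sum n k v) r = (\<Sum>t\<le>T. window_sum n k v (r + t * (k + 1)))"
    using window_sum_mod[OF k_pos periodic] mod_mult_self2[of "r + t" k t for t]
    by (auto simp: block_sum_def T lessThan_Suc_atMost algebra_simps intro!: sum.cong)
  also have "\<dots> = (\<Sum>i<r + 1 + T * (k + 1). zext n v i)"
    by (rule window_sum_blocks[OF r])
  also have "\<dots> = (\<Sum>i<n. zext n v i)"
    using T r n_add_k_eq_e e_le_k by (intro sum_zext_lessThan) (auto simp: block_length_def split: if_splits)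
  finally show ?thesis .
qed

lemma mat_kernel_eq_0_if_prefix_sums_eq_0:
  assumes v: "v \<in> mat_kernel (A_mat n k)"
    and prefix_0: "\<And>i. i < m \<Longrightarrow> (\<Sum>l<n. (if l \<le> i then 1 else 0) * v $ l) = 0"
  shows "v = 0\<^sub>v n"
proof -
  have carrier: "v \<in> carrier_vec n"
    using v mat_kernel[OF A_mat_carrier] by blast
  have periodic: "\<forall>i<n. window_sum n k v (i + k) = window_sum n k v i"
    using v carrier mat_kernel_A_mat_iff by blast
  have "admissible (window_sum n k v)"
    using block_sum_window_sum[OF v] by (simp add: admissible_iff_block_sum)
  moreover have "\<forall>q<m. window_sum n k v q = 0"
    using prefix_0 prefix_sum_eq_window_sum m_le_k by (metis less_imp_le_nat order_trans)
  ultimately have "window_sum n k v j = 0" if "j < n" for j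
    using that admissible_eq_0 window_sum_mod[OF k_pos periodic] k_pos by simp
  then have "zext n v i = 0" if "i < n" for i
    using that by (rule zext_eq_0_if_window_sums_eq_0)
  then show ?thesis
    using carrier by (intro eq_vecI) (auto simp: zext_def)
qed

theorem kernel_dim_A_mat: "kernel_dim (A_mat n k) = m"
proof -
  interpret kernel n n "A_mat n k"
    by unfold_locales (rule A_mat_carrier)
  have "dim = m"
  proof (rule dim_eq_if_biorthogonal)
    show "kernel_vec (orbit_indicator q) \<in> mat_kernel (A_mat n k)" if "q < m" for q
      using that by (intro kernel_vec_mem_kernel admissible_orbit_indicator)
    show "(\<Sum>l<n. (if l \<le> i then 1 else 0) * kernel_vec (orbit_indicator q) $ l) = (if i = q then 1 else 0)"
      if "i < m" "q < m" for i q
    proof -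
      have "i < k"
        using that m_le_k by simp
      then have "(\<Sum>l<n. (if l \<le> i then 1 else 0) * kernel_vec (orbit_indicator q) $ l)
          = window_sum n k (kernel_vec (orbit_indicator q)) i"
        by (intro prefix_sum_eq_window_sum) simp
      also have "\<dots> = orbit_indicator q i"
        using \<open>i < k\<close> window_sum_kernel_vec[OF admissible_orbit_indicator[OF \<open>q < m\<close>], of i] by simp
      finally show ?thesis
        using orbit_indicator_less_m[OF \<open>i < m\<close>] by simp
    qed
  qed (rule mat_kernel_eq_0_if_prefix_sums_eq_0)
  then show ?thesis
    by simp
qed

end

section \<open>The nullity \<open>N\<close>\<close>

lemma N_eq_kernel_dim_shift:
  fixes n :: int
  assumes k: "1 \<le> k" and n: "n \<le> int k * (int k + 1)"
  obtains d :: nat where "N n k = kernel_dim (A_mat (nat (n + int d * (int k ^ 2 + int k))) k)"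
    and "int k < n + int d * (int k ^ 2 + int k)"
proof -
  define Q where "Q = int k ^ 2 + int k"
  define X where "X = n - int k - 1"
  define d where "d = nat (- (X div Q))"
  have Q: "0 < Q"
    using k by (simp add: Q_def add_nonneg_pos)
  have "X div Q \<le> (Q - 1) div Q"
    using n Q by (intro zdiv_mono1) (simp_all add: X_def Q_def power2_eq_square algebra_simps)
  also have "\<dots> = 0"
    using Q by (simp add: div_pos_pos_trivial)
  finally have "int d = - (X div Q)"
    by (simp add: d_def)
  then have shift: "n + int d * Q = int k + 1 + X mod Q"
    by (simp add: X_def minus_div_mult_eq_mod[symmetric] algebra_simps)
  have "0 \<le> X mod Q"
    using Q by simp
  then have "nat (n + int d * Q) = k + 1 + nat (X mod Q)"
    by (simp add: shift nat_add_distrib)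
  then have "N n k = kernel_dim (A_mat (nat (n + int d * Q)) k)"
    by (simp add: N_def N_nat_def X_def Q_def)
  moreover have "int k < n + int d * Q"
    using shift \<open>0 \<le> X mod Q\<close> by simp
  ultimately show ?thesis
    using that[of d] by (simp add: Q_def)
qed

lemma cong_imp_eq_add_mult_nat:
  fixes a b :: int
  assumes "1 \<le> k" "0 \<le> a" "a \<le> b" "int k mod b = a mod b"
  obtains m :: nat where "int k = a + b * int m"
proof -
  obtain c where c: "int k - a = b * c"
    using assms(4) by (metis dvdE mod_eq_dvd_iff)
  have "0 \<le> c"
  proof (rule ccontr)
    assume "\<not> 0 \<le> c"
    then have "b * c \<le> b * (- 1)"
      using assms by (intro mult_left_mono) auto
    then show False
      using assms c by linarith
  qed
  then show ?thesis
    using that[of "nat c"] c by simp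
qed

lemma N_eq_of_decomposition:
  fixes n :: int
  assumes k: "1 \<le> k" and ab: "a \<le> b" and k_eq: "k = a + m * b"
    and n: "n + int k = int (m * (k + 1) + a * (m + 1))"
  shows "N n k = m"
proof -
  have "b \<noteq> 0"
    using k ab k_eq by (cases b) auto
  then have "m \<le> k"
    using k_eq by (simp add: trans_le_add2)
  then have "m * (k + 1) \<le> k * (k + 1)"
    by (rule mult_le_mono1)
  moreover have "a * (m + 1) \<le> k"
    using mult_le_mono1[OF ab, of m] k_eq by (simp add: algebra_simps)
  ultimately have "n \<le> int k * (int k + 1)"
    using n by (simp add: algebra_simps flip: of_nat_mult of_nat_add)
  then obtain d :: nat where N: "N n k = kernel_dim (A_mat (nat (n + int d * (int k ^ 2 + int k))) k)"
    and pos: "int k < n + int d * (int k ^ 2 + int k)"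
    using N_eq_kernel_dim_shift k by blast
  define n' where "n' = nat (n + int d * (int k ^ 2 + int k))"
  have "int n' = n + int d * (int k ^ 2 + int k)"
    using pos by (simp add: n'_def)
  then have "int (n' + k) = int ((m + d * k) * (k + 1) + a * (m + 1))"
    using n by (simp add: algebra_simps power2_eq_square)
  then have "n' + k = (m + d * k) * (k + 1) + a * (m + 1)"
    by (simp only: of_nat_eq_iff)
  moreover have "1 \<le> n'"
    using pos by (simp add: n'_def)
  ultimately interpret toeplitz_nullity k n' a b m "m + d * k"
    using k ab k_eq by unfold_locales auto
  show ?thesis
    using N kernel_dim_A_mat by (simp add: n'_def)
qed

theorem theorem8p10:
  fixes k :: nat and a b :: int
  assumes "k \<ge> 1" and "b \<ge> 1" and "0 \<le> a" and "a \<le> b"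
    and "int k mod b = a mod b"
  shows "int (N ((int k + 1 + a - b) * (int k - a) div b) k) = (int k - a) div b"
proof -
  obtain m :: nat where k_eq: "int k = a + b * int m"
    using cong_imp_eq_add_mult_nat assms(1,3-5) by blast
  have quotients: "(int k + 1 + a - b) * (int k - a) div b = (int k + 1 + a - b) * int m"
    "(int k - a) div b = int m"
    using assms(2) by (simp_all add: k_eq)
  have "int k = int (nat a + m * nat b)"
    using k_eq assms(2,3) by (simp add: algebra_simps)
  then have "k = nat a + m * nat b"
    by (simp only: of_nat_eq_iff)
  moreover have "(int k + 1 + a - b) * int m + int k = int (m * (k + 1) + nat a * (m + 1))"
    using assms(2,3) by (simp add: k_eq algebra_simps)
  ultimately have "N ((int k + 1 + a - b) * int m) k = m"
    using N_eq_of_decomposition assms(1,4) by (simp add: nat_le_eq_zle)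
  then show ?thesis
    using quotients by simp
qed

end
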